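(* Let $n\ge1$ and $d\in\mathbf D$. If $\ell(d)\ne\ell(r_n(d))$, then $d=j/2^n$ for some integer $j$. In particular, for every $r\in\mathrm{Rot}$ there are only finitely many $d\in\mathbf D$ with $\ell(d)\ne\ell(r(d))$.
   Context: $\mathbf D=\{a/2^n:n\ge1,0\le a\le2^n-1\}\subset[0,1)\cong\mathbf R/\mathbf Z$. A standard dyadic interval (s.d.i.) is $(a/2^k,(a+1)/2^k)$ with $a,k\in\mathbf N$, $(a+1)/2^k\le1$. $\ell:\mathbf D\to\mathbf R$ is $\ell(d)=-\log_2(d'-d)$ where $(d,d')$ is the largest s.d.i. with left endpoint $d$ (e.g. $\ell(0)=0$, $\ell(1/2)=1$, $\ell(1/4)=\ell(3/4)=2$). $r_n$ is the rotation $x\mapsto x+2^{-n}\pmod 1$ of the torus (an element of Thompson's group $T$), and $\mathrm{Rot}=\bigcup_{n\ge1}\langle r_n\rangle$ is the group of rotations by dyadic angles $k/2^n$. *)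

theory Defs
  imports Complex_Main
begin

text \<open>The circle R/Z is represented by [0,1) inside the reals, addition mod 1 via frac.\<close>

definition dyadics :: "real set" where
  "dyadics = {real a / 2 ^ n | a n :: nat. n \<ge> 1 \<and> a \<le> 2 ^ n - 1}"

text \<open>Standard dyadic interval (a/2^k,(a+1)/2^k) is encoded by the pair (a,k).\<close>
definition is_sdi :: "nat \<Rightarrow> nat \<Rightarrow> bool" where
  "is_sdi a k \<longleftrightarrow> (real a + 1) / 2 ^ k \<le> 1"

text \<open>The largest s.d.i. with left endpoint d is the one of least level k;
  ell d = -log2 of its length.\<close>
definition ell :: "real \<Rightarrow> real" where
  "ell d = - log 2 (1 / 2 ^ (LEAST k. \<exists>a. is_sdi a k \<and> real a / 2 ^ k = d))"

definition rot :: "real \<Rightarrow> real \<Rightarrow> real" where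
  "rot t x = frac (x + t)"

definition r :: "nat \<Rightarrow> real \<Rightarrow> real" where
  "r n = rot (1 / 2 ^ n)"

text \<open>Rot = union of the cyclic groups generated by r_n, i.e. rotations by k/2^n.\<close>
definition Rot :: "(real \<Rightarrow> real) set" where
  "Rot = {rot (real_of_int k / 2 ^ n) | k n. n \<ge> 1}"

end

theory Submission
  imports Defs
begin

text \<open>A point x of [0,1) is a left endpoint of an s.d.i. of level k exactly when 2^k x is an
  integer, so ell x only depends on the set of levels k with 2^k x \<in> \<int>. If 2^n d \<notin> \<int>,
  a rotation by an angle j/2^n does not change this set: for levels m \<ge> n it shifts 2^m d by an
  integer, and for levels m < n neither point qualifies, since 2^m y \<in> \<int> forces 2^n y \<in> \<int>.
  Hence ell can only change under such a rotation at the finitely many points of the grid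
  2^-n \<int> in [0,1).\<close>

lemma sdi_left_endpoint_iff:
  assumes "0 \<le> x" "x < 1"
  shows "(\<exists>a. is_sdi a k \<and> real a / 2 ^ k = x) \<longleftrightarrow> 2 ^ k * x \<in> \<int>"
proof
  assume "\<exists>a. is_sdi a k \<and> real a / 2 ^ k = x"
  then obtain a where "real a / 2 ^ k = x" by blast
  then have "2 ^ k * x = real a" by (simp add: field_simps)
  then show "2 ^ k * x \<in> \<int>" by simp
next
  assume "2 ^ k * x \<in> \<int>"
  then obtain j where j: "2 ^ k * x = real_of_int j" by (auto elim: Ints_cases)
  have "0 \<le> real_of_int j" "real_of_int j < real_of_int (2 ^ k)"
    using assms by (simp_all flip: j)
  then have j_bounds: "0 \<le> j" "j + 1 \<le> 2 ^ k" by (simp_all only: of_int_le_iff of_int_less_iff)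
  define a where "a = nat j"
  have a: "real a = real_of_int j" using j_bounds by (simp add: a_def)
  have "real_of_int (j + 1) \<le> real_of_int (2 ^ k)"
    using j_bounds(2) by (simp only: of_int_le_iff)
  then have "is_sdi a k" by (simp add: is_sdi_def a)
  moreover have "real a / 2 ^ k = x" using a j by (simp add: field_simps)
  ultimately show "\<exists>a. is_sdi a k \<and> real a / 2 ^ k = x" by blast
qed

lemma ell_eqI:
  assumes "0 \<le> x" "x < 1" "0 \<le> y" "y < 1"
    and "\<And>k. 2 ^ k * x \<in> \<int> \<longleftrightarrow> 2 ^ k * y \<in> \<int>"
  shows "ell x = ell y"
  unfolding ell_def
  using sdi_left_endpoint_iff[OF assms(1,2)] sdi_left_endpoint_iff[OF assms(3,4)] assms(5)
  by simp

lemma power2_mult_in_Ints_mono: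
  assumes "2 ^ m * (y::real) \<in> \<int>" "m \<le> n"
  shows "2 ^ n * y \<in> \<int>"
proof -
  have "(2::real) ^ n = 2 ^ (n - m) * 2 ^ m"
    using assms(2) by (simp flip: power_add)
  then have "(2::real) ^ n * y = 2 ^ (n - m) * (2 ^ m * y)" by (metis mult.assoc)
  then show ?thesis using assms(1) by (metis Ints_mult Ints_numeral Ints_power)
qed

lemma mult_frac_in_Ints_iff:
  assumes "(c::real) \<in> \<int>"
  shows "c * frac y \<in> \<int> \<longleftrightarrow> c * y \<in> \<int>"
proof -
  have "c * frac y = c * y - c * of_int \<lfloor>y\<rfloor>" by (simp add: frac_def algebra_simps)
  moreover have "c * of_int \<lfloor>y\<rfloor> \<in> \<int>" using assms by simp
  ultimately show ?thesis by simp
qed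

lemma power2_mult_rot_in_Ints_iff:
  assumes "2 ^ n * (d::real) \<notin> \<int>"
  shows "2 ^ m * rot (of_int j / 2 ^ n) d \<in> \<int> \<longleftrightarrow> 2 ^ m * d \<in> \<int>"
proof (cases "n \<le> m")
  case True
  have "(2::real) ^ m = 2 ^ (m - n) * 2 ^ n"
    using True by (simp flip: power_add)
  then have "(2::real) ^ m * (of_int j / 2 ^ n) = of_int (j * 2 ^ (m - n))" by simp
  then have "2 ^ m * (d + of_int j / 2 ^ n) \<in> \<int> \<longleftrightarrow> 2 ^ m * d \<in> \<int>"
    by (simp add: distrib_left)
  then show ?thesis unfolding rot_def by (simp add: mult_frac_in_Ints_iff)
next
  case False
  have "2 ^ n * (d + of_int j / 2 ^ n) \<notin> \<int>"
    using assms by (simp add: distrib_left)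
  then have "2 ^ m * (d + of_int j / 2 ^ n) \<notin> \<int>" "2 ^ m * d \<notin> \<int>"
    using False assms power2_mult_in_Ints_mono[of m _ n] by auto
  then show ?thesis unfolding rot_def by (simp add: mult_frac_in_Ints_iff)
qed

lemma ell_rot_eq:
  assumes "0 \<le> d" "d < 1" "2 ^ n * d \<notin> \<int>"
  shows "ell (rot (of_int j / 2 ^ n) d) = ell d"
  using assms power2_mult_rot_in_Ints_iff[OF assms(3)]
  by (intro ell_eqI) (simp_all add: rot_def frac_lt_1)

lemma dyadics_subset: "dyadics \<subseteq> {0..<1}"
proof
  fix d assume "d \<in> dyadics"
  then obtain a n where d: "d = real a / 2 ^ n" "a \<le> 2 ^ n - 1" unfolding dyadics_def by blast
  have "a < 2 ^ n" using d(2) zero_less_power[of "2::nat" n] by linarith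
  then have "real a < 2 ^ n" by (metis of_nat_less_numeral_power_cancel_iff)
  then show "d \<in> {0..<1}" using d(1) by simp
qed

lemma finite_grid_points:
  "finite {x::real \<in> {0..<1}. 2 ^ n * x \<in> \<int>}"
proof (rule finite_subset)
  show "{x::real \<in> {0..<1}. 2 ^ n * x \<in> \<int>} \<subseteq> (\<lambda>j::int. of_int j / 2 ^ n) ` {0..<2 ^ n}"
  proof
    fix x :: real assume "x \<in> {x \<in> {0..<1}. 2 ^ n * x \<in> \<int>}"
    then obtain j where x: "0 \<le> x" "x < 1" "2 ^ n * x = of_int j" by (auto elim: Ints_cases)
    then have "0 \<le> real_of_int j" "real_of_int j < 2 ^ n" by (simp_all flip: x(3))
    then have "j \<in> {0..<2 ^ n}" by simp
    moreover have "x = of_int j / 2 ^ n" using x(3) by (simp add: field_simps)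
    ultimately show "x \<in> (\<lambda>j::int. of_int j / 2 ^ n) ` {0..<2 ^ n}" by blast
  qed
qed simp

theorem proposition3p18:
  shows "(\<forall>n d. n \<ge> 1 \<longrightarrow> d \<in> dyadics \<longrightarrow> ell d \<noteq> ell (r n d)
            \<longrightarrow> (\<exists>j::int. d = real_of_int j / 2 ^ n))
       \<and> (\<forall>\<rho>\<in>Rot. finite {d \<in> dyadics. ell d \<noteq> ell (\<rho> d)})"
proof (intro conjI allI impI ballI)
  fix n d
  assume "d \<in> dyadics" "ell d \<noteq> ell (r n d)"
  then have "2 ^ n * d \<in> \<int>"
    using dyadics_subset ell_rot_eq[of d n 1] unfolding r_def by fastforce
  then obtain j where "2 ^ n * d = real_of_int j" by (auto elim: Ints_cases)
  then show "\<exists>j::int. d = real_of_int j / 2 ^ n" by (auto simp: field_simps)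
next
  fix \<rho> assume "\<rho> \<in> Rot"
  then obtain j n where \<rho>: "\<rho> = rot (real_of_int j / 2 ^ n)" unfolding Rot_def by blast
  have "{d \<in> dyadics. ell d \<noteq> ell (\<rho> d)} \<subseteq> {x \<in> {0..<1}. 2 ^ n * x \<in> \<int>}"
    using dyadics_subset ell_rot_eq[of _ n j] unfolding \<rho> by fastforce
  then show "finite {d \<in> dyadics. ell d \<noteq> ell (\<rho> d)}"
    using finite_grid_points by (rule finite_subset)
qed

end
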